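(* Let $n \ge 3$, let $x_1, \dots, x_n \in \mathbb{R}$ be pairwise distinct, let $h(\theta) = \prod_{j=1}^n (x_j-\theta)$ and $q(\theta) = \theta - n\,h(\theta)/h'(\theta)$. Then $q$ maps the upper half-plane $\{\Im\theta>0\}$ into the lower half-plane $\{\Im\theta<0\}$, and maps the lower half-plane into the upper half-plane. *)

theory Defs
  imports Complex_Main "HOL-Computational_Algebra.Polynomial"
begin

end

theory Submission
  imports Defs "HOL-Analysis.Inner_Product"
begin

(* With w_j = 1 / (theta - x_j) the logarithmic derivative gives h'/h = S := sum_j w_j, so
   q(theta) = theta - n / S.  Since the x_j are real, Im w_j = - Im theta * |w_j|^2, hence
   Im q(theta) = Im theta * (|S|^2 - n * sum_j |w_j|^2) / |S|^2.  The bracket is negative by the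
   strict Cauchy-Schwarz inequality, the w_j being pairwise distinct. *)

lemma sum_norm_centered_squared:
  fixes w :: "'a \<Rightarrow> 'b::real_inner"
  shows "(\<Sum>a\<in>A. (norm (real (card A) *\<^sub>R w a - sum w A))\<^sup>2)
    = real (card A) * (real (card A) * (\<Sum>a\<in>A. (norm (w a))\<^sup>2) - (norm (sum w A))\<^sup>2)"
proof -
  define c where "c = real (card A)"
  define S where "S = sum w A"
  have "(\<Sum>a\<in>A. (norm (c *\<^sub>R w a - S))\<^sup>2)
      = (\<Sum>a\<in>A. c\<^sup>2 * (norm (w a))\<^sup>2 - 2 * c * inner (w a) S + inner S S)"
    unfolding power2_norm_eq_inner
    by (intro sum.cong) (auto simp: inner_diff_left inner_diff_right inner_commute
        power2_eq_square algebra_simps)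
  also have "\<dots> = c\<^sup>2 * (\<Sum>a\<in>A. (norm (w a))\<^sup>2) - 2 * c * (norm S)\<^sup>2 + c * (norm S)\<^sup>2"
    by (simp add: sum.distrib sum_subtractf sum_distrib_left S_def c_def inner_sum_left
        power2_norm_eq_inner)
  finally show ?thesis
    by (simp add: c_def S_def power2_eq_square algebra_simps)
qed

lemma norm_sum_squared_less:
  fixes w :: "'a \<Rightarrow> 'b::real_inner"
  assumes "finite A" "a \<in> A" "b \<in> A" "w a \<noteq> w b"
  shows "(norm (sum w A))\<^sup>2 < real (card A) * (\<Sum>a\<in>A. (norm (w a))\<^sup>2)"
proof -
  define c where "c = real (card A)"
  have "c > 0" using assms(1,2) by (auto simp: c_def card_gt_0_iff)
  have "c * (c * (\<Sum>a\<in>A. (norm (w a))\<^sup>2) - (norm (sum w A))\<^sup>2) \<ge> 0"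
    using sum_norm_centered_squared[of A w] by (metis c_def sum_nonneg zero_le_power2)
  with \<open>c > 0\<close> have le: "(norm (sum w A))\<^sup>2 \<le> c * (\<Sum>a\<in>A. (norm (w a))\<^sup>2)"
    by (simp add: zero_le_mult_iff)
  show ?thesis
  proof (rule ccontr)
    assume "\<not> ?thesis"
    with le have "(\<Sum>a\<in>A. (norm (c *\<^sub>R w a - sum w A))\<^sup>2) = 0"
      using sum_norm_centered_squared[of A w] by (simp add: c_def)
    then have "\<forall>a\<in>A. c *\<^sub>R w a = sum w A"
      using assms(1) by (simp add: sum_nonneg_eq_0_iff)
    then have "c *\<^sub>R w a = c *\<^sub>R w b" using assms(2,3) by simp
    with \<open>c > 0\<close> assms(4) show False by simp
  qed
qed

lemma Im_inverse_conv_norm: "Im (inverse z) = - Im z / (cmod z)\<^sup>2"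
  by (simp add: cmod_power2)

lemma poly_pderiv_prod_linear:
  fixes c :: "'a \<Rightarrow> 'b::field"
  assumes "finite A" "\<forall>j\<in>A. z \<noteq> c j"
  shows "poly (pderiv (\<Prod>j\<in>A. [:c j, -1:])) z
    = poly (\<Prod>j\<in>A. [:c j, -1:]) z * (\<Sum>j\<in>A. 1 / (z - c j))"
proof -
  have "poly (pderiv (\<Prod>j\<in>A. [:c j, -1:])) z = (\<Sum>a\<in>A. (\<Prod>j\<in>A - {a}. c j - z) * (-1))"
    by (simp add: pderiv_prod poly_sum poly_prod pderiv_pCons)
  also have "\<dots> = (\<Sum>a\<in>A. (\<Prod>j\<in>A. c j - z) * (1 / (z - c a)))"
  proof (rule sum.cong[OF refl])
    fix a assume "a \<in> A"
    then have "(\<Prod>j\<in>A. c j - z) = (c a - z) * (\<Prod>j\<in>A - {a}. c j - z)"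
      using assms(1) by (simp add: prod.remove)
    with \<open>a \<in> A\<close> assms(2)
    show "(\<Prod>j\<in>A - {a}. c j - z) * (-1) = (\<Prod>j\<in>A. c j - z) * (1 / (z - c a))"
      by (simp add: field_simps)
  qed
  finally show ?thesis by (simp add: poly_prod sum_distrib_left)
qed

lemma Im_sub_card_div_sum_inverse_mult_Im_neg:
  fixes x :: "'a \<Rightarrow> real"
  assumes "finite A" "inj_on x A" "a \<in> A" "b \<in> A" "a \<noteq> b" "Im \<theta> \<noteq> 0"
  shows "Im (\<theta> - of_nat (card A) / (\<Sum>j\<in>A. 1 / (\<theta> - of_real (x j)))) * Im \<theta> < 0"
proof -
  define w where "w j = inverse (\<theta> - of_real (x j))" for j
  define S where "S = sum w A"
  define T where "T = (\<Sum>j\<in>A. (cmod (w j))\<^sup>2)"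
  define c where "c = real (card A)"
  have Im_w: "Im (w j) = - Im \<theta> * (cmod (w j))\<^sup>2" for j
    unfolding w_def Im_inverse_conv_norm norm_inverse power_inverse by (simp add: divide_inverse)
  have Im_S: "Im S = - Im \<theta> * T"
    by (simp add: S_def T_def Im_sum Im_w sum_distrib_left)
  have w_ne: "w j \<noteq> 0" for j
    using assms(6) by (auto simp: w_def)
  have "w a \<noteq> w b"
    using assms(2-6) by (auto simp: w_def inj_on_def)
  then have CS: "(cmod S)\<^sup>2 < c * T"
    unfolding S_def T_def c_def by (rule norm_sum_squared_less[OF assms(1,3,4)])
  have "T > 0"
    unfolding T_def using assms(1,3) w_ne by (intro sum_pos2[where i=a]) auto
  with Im_S assms(6) have "S \<noteq> 0" by auto
  then have S_pos: "(cmod S)\<^sup>2 > 0" by simp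
  have "Im (\<theta> - of_real c / S) = Im \<theta> - c * Im (inverse S)"
    by (simp add: divide_inverse)
  also have "\<dots> = Im \<theta> * ((cmod S)\<^sup>2 - c * T) / (cmod S)\<^sup>2"
    using S_pos unfolding Im_inverse_conv_norm Im_S by (simp add: field_simps)
  finally have "Im (\<theta> - of_real c / S) * Im \<theta> = (Im \<theta>)\<^sup>2 * ((cmod S)\<^sup>2 - c * T) / (cmod S)\<^sup>2"
    by (simp add: power2_eq_square)
  also have "\<dots> < 0"
    using CS S_pos assms(6) by (simp add: divide_neg_pos mult_pos_neg)
  finally show ?thesis by (simp add: S_def w_def c_def inverse_eq_divide)
qed

theorem mainTheorem8:
  fixes n :: nat and x :: "nat \<Rightarrow> real" and h :: "complex poly" and q :: "complex \<Rightarrow> complex"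
  assumes "n \<ge> 3" and "inj_on x {1..n}"
  defines "h \<equiv> \<Prod>j=1..n. [:complex_of_real (x j), -1:]"
  defines "q \<equiv> (\<lambda>\<theta>. \<theta> - of_nat n * poly h \<theta> / poly (pderiv h) \<theta>)"
  shows "(\<forall>\<theta>. Im \<theta> > 0 \<longrightarrow> Im (q \<theta>) < 0) \<and> (\<forall>\<theta>. Im \<theta> < 0 \<longrightarrow> Im (q \<theta>) > 0)"
proof -
  have "Im (q \<theta>) * Im \<theta> < 0" if "Im \<theta> \<noteq> 0" for \<theta>
  proof -
    have off_roots: "\<forall>j\<in>{1..n}. \<theta> \<noteq> complex_of_real (x j)"
      using that by auto
    have "poly h \<theta> \<noteq> 0"
      using off_roots by (auto simp: h_def poly_prod)
    moreover have "poly (pderiv h) \<theta> = poly h \<theta> * (\<Sum>j\<in>{1..n}. 1 / (\<theta> - of_real (x j)))"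
      unfolding h_def using off_roots by (intro poly_pderiv_prod_linear) auto
    ultimately have "q \<theta> = \<theta> - of_nat (card {1..n}) / (\<Sum>j\<in>{1..n}. 1 / (\<theta> - of_real (x j)))"
      by (simp add: q_def)
    also have "Im \<dots> * Im \<theta> < 0"
      using assms(1,2) that by (intro Im_sub_card_div_sum_inverse_mult_Im_neg[of _ _ 1 2]) auto
    finally show ?thesis .
  qed
  then show ?thesis
    by (metis mult_less_0_iff order.asym less_irrefl)
qed

end
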